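(* Let $a,b$ be even elements of a (graded, right) pre-Lie algebra and let $N\ge1$. Then $$[\cdots[[a,b],b],\dots,b]\ (N\text{ copies of }b)\;=\;\sum_{i=0}^{N}(-1)^i\binom{N}{i}\Big(\cdots\big((b^{[i]}\circ a)\circ b\big)\circ\cdots\Big)\circ b,$$ where in the $i$-th summand $b$ is applied on the right $N-i$ times, $b^{[i]}=(\cdots(b\circ b)\circ\cdots)\circ b$ ($i$ factors), and the $i=0$ term $b^{[0]}\circ a$ is to be read as $a$.
   Context: A (graded, right) pre-Lie algebra is a graded module with a product $\circ$ of degree $0$ such that $(x\circ y)\circ z-x\circ(y\circ z)$ is graded symmetric in $y,z$, and $[x,y]=x\circ y-(-1)^{|x||y|}y\circ x$. "Even" refers to this grading. *)

theory Defs
  imports Main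
begin

text \<open>A graded module is modelled as an abelian group 'a together with a family
  Hom :: int => 'a set of homogeneous components (subgroups); a graded
  (right) pre-Lie product is a biadditive operation pr of degree 0 whose
  associator is graded symmetric in its last two arguments.\<close>

definition sgn_smul :: "int \<Rightarrow> 'a::ab_group_add \<Rightarrow> 'a" where
  "sgn_smul k x = (if even k then x else - x)"

definition assoc :: "('a \<Rightarrow> 'a \<Rightarrow> 'a) \<Rightarrow> 'a \<Rightarrow> 'a \<Rightarrow> 'a \<Rightarrow> 'a::ab_group_add" where
  "assoc pr x y z = pr (pr x y) z - pr x (pr y z)"

definition graded_prelie :: "(int \<Rightarrow> 'a::ab_group_add set) \<Rightarrow> ('a \<Rightarrow> 'a \<Rightarrow> 'a) \<Rightarrow> bool" where
  "graded_prelie Hom pr \<longleftrightarrow>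
     (\<forall>n. 0 \<in> Hom n \<and> (\<forall>x\<in>Hom n. \<forall>y\<in>Hom n. x + y \<in> Hom n \<and> - x \<in> Hom n)) \<and>
     (\<forall>x y z. pr (x + y) z = pr x z + pr y z) \<and>
     (\<forall>x y z. pr x (y + z) = pr x y + pr x z) \<and>
     (\<forall>m n x y. x \<in> Hom m \<longrightarrow> y \<in> Hom n \<longrightarrow> pr x y \<in> Hom (m + n)) \<and>
     (\<forall>m n x y z. y \<in> Hom m \<longrightarrow> z \<in> Hom n \<longrightarrow>
        assoc pr x y z = sgn_smul (m * n) (assoc pr x z y))"

definition gbr :: "('a \<Rightarrow> 'a \<Rightarrow> 'a) \<Rightarrow> int \<Rightarrow> int \<Rightarrow> 'a \<Rightarrow> 'a \<Rightarrow> 'a::ab_group_add" where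
  "gbr pr m n x y = pr x y - sgn_smul (m * n) (pr y x)"

fun iter_br :: "('a \<Rightarrow> 'a \<Rightarrow> 'a) \<Rightarrow> int \<Rightarrow> int \<Rightarrow> 'a \<Rightarrow> 'a \<Rightarrow> nat \<Rightarrow> 'a::ab_group_add" where
  "iter_br pr p q a b 0 = a"
| "iter_br pr p q a b (Suc k) = gbr pr (p + int k * q) q (iter_br pr p q a b k) b"

fun rpow :: "('a \<Rightarrow> 'a \<Rightarrow> 'a) \<Rightarrow> 'a \<Rightarrow> nat \<Rightarrow> 'a" where
  "rpow pr b 0 = b"   \<comment> \<open>unused: b^[0] o a is read as a below\<close>
| "rpow pr b (Suc 0) = b"
| "rpow pr b (Suc (Suc i)) = pr (rpow pr b (Suc i)) b"

definition rmul_iter :: "('a \<Rightarrow> 'a \<Rightarrow> 'a) \<Rightarrow> 'a \<Rightarrow> nat \<Rightarrow> 'a \<Rightarrow> 'a" where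
  "rmul_iter pr b k x = ((\<lambda>y. pr y b) ^^ k) x"

definition nsmul :: "nat \<Rightarrow> 'a::ab_group_add \<Rightarrow> 'a" where
  "nsmul n x = (\<Sum>_<n. x)"

end

theory Submission
  imports Defs HOL.Modules
begin

text \<open>For even a and b the bracket with b is the difference of right and left multiplication by b,
  and the symmetry of the associator in its last two (even) arguments turns left multiplication by
  b^[j] of such a difference into (b^[j] o y) o b - b^[j+1] o y. Hence u N j := b^[j] o [..[a,b],..,b]
  satisfies the recurrence u (N+1) j = R (u N j) - u N (j+1) for the right multiplication R by b,
  whose solution, by Pascal's rule, is the alternating binomial sum of R^(N-i) (u 0 (i+j)).\<close>

lemma nsmul_add: "nsmul (m + n) x = nsmul m x + nsmul n (x :: 'a::ab_group_add)"
  unfolding nsmul_def by (induct n) (auto simp: add.assoc)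

lemma sgn_smul_zero [simp]: "sgn_smul k (0 :: 'a::ab_group_add) = 0"
  unfolding sgn_smul_def by simp

lemma sgn_smul_add: "sgn_smul k (x + y) = sgn_smul k x + sgn_smul k (y :: 'a::ab_group_add)"
  unfolding sgn_smul_def by simp

lemma sgn_smul_one_plus: "sgn_smul (1 + k) x = - sgn_smul k (x :: 'a::ab_group_add)"
  unfolding sgn_smul_def by simp

context additive
begin

lemma nsmul: "f (nsmul n x) = nsmul n (f x)"
  unfolding nsmul_def by (simp add: sum)

lemma sgn_smul: "f (sgn_smul k x) = sgn_smul k (f x)"
  unfolding sgn_smul_def by (simp add: minus)

end

lemma alternating_binomial_sum_Suc:
  fixes h :: "nat \<Rightarrow> 'a::ab_group_add"
  shows "(\<Sum>i=0..N. sgn_smul (int i) (nsmul (N choose i) (h i)))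
       - (\<Sum>i=0..N. sgn_smul (int i) (nsmul (N choose i) (h (Suc i))))
       = (\<Sum>i=0..Suc N. sgn_smul (int i) (nsmul (Suc N choose i) (h i)))"
proof -
  let ?lower = "\<lambda>i. if i = 0 then 0 else N choose (i - 1)"
  have pascal: "Suc N choose i = (N choose i) + ?lower i" for i
    by (cases i) simp_all
  have "(\<Sum>i=0..N. sgn_smul (int i) (nsmul (N choose i) (h i)))
      = (\<Sum>i=0..Suc N. sgn_smul (int i) (nsmul (N choose i) (h i)))"
    by (simp add: nsmul_def binomial_eq_0)
  moreover have "- (\<Sum>i=0..N. sgn_smul (int i) (nsmul (N choose i) (h (Suc i))))
      = (\<Sum>i=0..Suc N. sgn_smul (int i) (nsmul (?lower i) (h i)))"
    by (subst sum.atLeast0_atMost_Suc_shift) (simp add: sgn_smul_one_plus sum_negf nsmul_def)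
  ultimately show ?thesis
    by (simp add: pascal nsmul_add sgn_smul_add sum.distrib)
qed

lemma binomial_expansion_of_difference_recurrence:
  fixes u :: "nat \<Rightarrow> nat \<Rightarrow> 'a::ab_group_add"
  assumes R: "additive R"
    and rec: "\<And>N j. u (Suc N) j = R (u N j) - u N (Suc j)"
  shows "u N j = (\<Sum>i=0..N. sgn_smul (int i) (nsmul (N choose i) ((R ^^ (N - i)) (u 0 (i + j)))))"
proof (induction N arbitrary: j)
  case 0
  show ?case by (simp add: sgn_smul_def nsmul_def)
next
  case (Suc N)
  let ?h = "\<lambda>i. (R ^^ (Suc N - i)) (u 0 (i + j))"
  have R_step: "R (u N j) = (\<Sum>i=0..N. sgn_smul (int i) (nsmul (N choose i) (?h i)))"
    unfolding Suc.IH additive.sum[OF R] additive.sgn_smul[OF R] additive.nsmul[OF R]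
    by (intro sum.cong) (simp_all add: Suc_diff_le)
  have shift_step: "u N (Suc j) = (\<Sum>i=0..N. sgn_smul (int i) (nsmul (N choose i) (?h (Suc i))))"
    unfolding Suc.IH by simp
  show ?case
    unfolding rec R_step shift_step by (rule alternating_binomial_sum_Suc)
qed

lemma graded_prelie_additive_left: "graded_prelie Hom pr \<Longrightarrow> additive (\<lambda>x. pr x z)"
  unfolding graded_prelie_def additive_def by blast

lemma graded_prelie_additive_right: "graded_prelie Hom pr \<Longrightarrow> additive (pr x)"
  unfolding graded_prelie_def additive_def by blast

lemma graded_prelie_pr_Hom:
  "graded_prelie Hom pr \<Longrightarrow> x \<in> Hom m \<Longrightarrow> y \<in> Hom n \<Longrightarrow> pr x y \<in> Hom (m + n)"
  unfolding graded_prelie_def by blast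

lemma graded_prelie_diff_Hom:
  "graded_prelie Hom pr \<Longrightarrow> x \<in> Hom n \<Longrightarrow> y \<in> Hom n \<Longrightarrow> x - y \<in> Hom n"
  unfolding graded_prelie_def by (metis diff_conv_add_uminus)

lemma graded_prelie_assoc_swap_even:
  assumes "graded_prelie Hom pr" "y \<in> Hom m" "z \<in> Hom n" "even (m * n)"
  shows "assoc pr x y z = assoc pr x z y"
  using assms unfolding graded_prelie_def sgn_smul_def by simp

lemma gbr_Hom:
  assumes "graded_prelie Hom pr" "x \<in> Hom m" "y \<in> Hom n"
  shows "gbr pr m n x y \<in> Hom (m + n)"
proof -
  have xy: "pr x y \<in> Hom (m + n)" and yx: "pr y x \<in> Hom (m + n)"
    using graded_prelie_pr_Hom[OF assms(1)] assms(2,3) by (force simp: add.commute)+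
  have "sgn_smul (m * n) (pr y x) \<in> Hom (m + n)"
    using yx assms(1) unfolding sgn_smul_def graded_prelie_def by auto
  with xy show ?thesis
    unfolding gbr_def using graded_prelie_diff_Hom[OF assms(1)] by blast
qed

lemma iter_br_Hom:
  assumes "graded_prelie Hom pr" "a \<in> Hom p" "b \<in> Hom q"
  shows "iter_br pr p q a b k \<in> Hom (p + int k * q)"
proof (induction k)
  case 0
  show ?case using assms(2) by simp
next
  case (Suc k)
  then show ?case
    using gbr_Hom[OF assms(1) Suc assms(3)] by (simp add: algebra_simps)
qed

lemma iter_br_Suc_even:
  assumes "even p" "even q"
  shows "iter_br pr p q a b (Suc k) = pr (iter_br pr p q a b k) b - pr b (iter_br pr p q a b k)"
  using assms by (simp add: gbr_def sgn_smul_def)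

lemma graded_prelie_left_mult_commutator:
  assumes "graded_prelie Hom pr" "y \<in> Hom m" "b \<in> Hom n" "even (m * n)"
  shows "pr c (pr y b - pr b y) = pr (pr c y) b - pr (pr c b) y"
proof -
  have "assoc pr c y b = assoc pr c b y"
    using graded_prelie_assoc_swap_even[OF assms] .
  then have "pr (pr c y) b - pr c (pr y b) = pr (pr c b) y - pr c (pr b y)"
    unfolding assoc_def .
  then show ?thesis
    unfolding additive.diff[OF graded_prelie_additive_right[OF assms(1)]]
    by (simp add: algebra_simps)
qed

definition lmul_rpow :: "('a \<Rightarrow> 'a \<Rightarrow> 'a) \<Rightarrow> 'a \<Rightarrow> nat \<Rightarrow> 'a \<Rightarrow> 'a" where
  "lmul_rpow pr b j y = (if j = 0 then y else pr (rpow pr b j) y)"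

lemma lmul_rpow_commutator:
  assumes "graded_prelie Hom pr" "y \<in> Hom m" "b \<in> Hom n" "even (m * n)"
  shows "lmul_rpow pr b j (pr y b - pr b y) = pr (lmul_rpow pr b j y) b - lmul_rpow pr b (Suc j) y"
proof (cases j)
  case 0
  then show ?thesis by (simp add: lmul_rpow_def)
next
  case (Suc i)
  then show ?thesis
    using graded_prelie_left_mult_commutator[OF assms, of "rpow pr b j"]
    by (simp add: lmul_rpow_def)
qed

theorem lemma7p9:
  fixes Hom :: "int \<Rightarrow> 'a::ab_group_add set"
    and pr :: "'a \<Rightarrow> 'a \<Rightarrow> 'a"
    and a b :: 'a and p q :: int and N :: nat
  assumes "graded_prelie Hom pr"
    and "a \<in> Hom p" and "b \<in> Hom q" and "even p" and "even q"
    and "N \<ge> 1"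
  shows "iter_br pr p q a b N =
    (\<Sum>i=0..N. sgn_smul (int i)
       (nsmul (N choose i)
         (rmul_iter pr b (N - i) (if i = 0 then a else pr (rpow pr b i) a))))"
proof -
  define u where "u N j = lmul_rpow pr b j (iter_br pr p q a b N)" for N j
  have recurrence: "u (Suc N) j = pr (u N j) b - u N (Suc j)" for N j
  proof -
    have "even ((p + int N * q) * q)" using \<open>even q\<close> by simp
    then show ?thesis
      unfolding u_def iter_br_Suc_even[OF \<open>even p\<close> \<open>even q\<close>]
      using lmul_rpow_commutator[OF assms(1) iter_br_Hom[OF assms(1-3)] assms(3)] by blast
  qed
  have expansion: "u N 0 = (\<Sum>i=0..N. sgn_smul (int i)
      (nsmul (N choose i) (((\<lambda>y. pr y b) ^^ (N - i)) (u 0 i))))"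
    using binomial_expansion_of_difference_recurrence[where u = u and j = 0]
      graded_prelie_additive_left[OF assms(1)] recurrence by simp
  show ?thesis using expansion
    by (simp add: u_def lmul_rpow_def rmul_iter_def)
qed

end
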